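(* Suppose that the finite family $\mathcal{A}=\{A_i\}_{i\in\Lambda}\subset GL_{d+1}(\mathbb{R})$ strictly preserves a simplicial cone $\Sigma=\Sigma_{v_1,\ldots,v_{d+1}}\subset\{x\in\mathbb{R}^{d+1}:x_{d+1}>0\}\cup\{0\}$. Then the associated IFS $\mathcal{F}_{\mathcal{A}}=\{f_A\}_{A\in\mathcal{A}}$ is real-analytic and uniformly hyperbolic on $\overline{V}\subset\mathbb{R}^d$, in the sense that there exist $C>0$ and $\gamma\in(0,1)$ such that $\max_{x\in\overline V}\|f'_{\mathbf{i}}(x)\|\le C\gamma^n$ for all $\mathbf{i}\in\Lambda^n$, where $f_{\mathbf{i}}=f_{A_{i_1}}\circ\cdots\circ f_{A_{i_n}}$ and $\|f'_{\mathbf{i}}(x)\|$ is the operator norm of the differential at $x$.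
   Context: For linearly independent $v_1,\ldots,v_{d+1}\in\mathbb{R}^{d+1}$, $\Sigma_{v_1,\ldots,v_{d+1}}=\{\sum_k x_kv_k: x_k\ge0\}$. $A$ strictly preserves $\Sigma$ if $A(\Sigma\setminus\{0\})\subset\Sigma^\circ$. For $x\in\mathbb{R}^d$, $f_A(x)=P_d\big(A(x,1)/A(x,1)_{d+1}\big)$ whenever $A(x,1)_{d+1}\ne0$, where $(x,1)\in\mathbb{R}^{d+1}$, $y_{d+1}$ is the last coordinate of $y$, and $P_d$ is the projection onto the first $d$ coordinates. $\overline{V}=P_d(\Sigma\cap\{x_{d+1}=1\})$ and $V$ is its interior. *)

theory Defs
  imports "HOL-Analysis.Analysis"
begin

text \<open>Convention: R^d is real^'d; R^(d+1) is real^('d::finite option), where the index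
None plays the role of the last coordinate d+1 and Some i the i-th coordinate.\<close>

definition lift1 :: "real^'d::finite \<Rightarrow> real^('d::finite option)" where
  "lift1 x = (\<chi> j. case j of None \<Rightarrow> 1 | Some i \<Rightarrow> x $ i)"

definition projd :: "real^('d::finite option) \<Rightarrow> real^'d" where
  "projd y = (\<chi> i. y $ (Some i))"

definition simp_cone :: "('d::finite option \<Rightarrow> real^('d::finite option)) \<Rightarrow> (real^('d::finite option)) set" where
  "simp_cone v = {y. \<exists>c. (\<forall>k. c k \<ge> 0) \<and> y = (\<Sum>k\<in>UNIV. c k *\<^sub>R v k)}"

definition strictly_preserves ::
  "real^('d::finite option)^('d::finite option) \<Rightarrow> (real^('d::finite option)) set \<Rightarrow> bool" where
  "strictly_preserves A S \<longleftrightarrow> (\<lambda>y. A *v y) ` (S - {0}) \<subseteq> interior S"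

definition fA :: "real^('d::finite option)^('d::finite option) \<Rightarrow> real^'d::finite \<Rightarrow> real^'d" where
  "fA A x = projd ((1 / (A *v lift1 x) $ None) *\<^sub>R (A *v lift1 x))"

definition Vbar :: "(real^('d::finite option)) set \<Rightarrow> (real^'d) set" where
  "Vbar S = projd ` (S \<inter> {y. y $ None = 1})"

definition fword :: "('i \<Rightarrow> real^('d::finite option)^('d::finite option)) \<Rightarrow> 'i list \<Rightarrow> real^'d::finite \<Rightarrow> real^'d" where
  "fword A ws = foldr (\<lambda>i g. fA (A i) \<circ> g) ws id"

text \<open>Real analyticity: locally the sum of an (unconditionally, i.e. absolutely)
convergent multivariate power series.\<close>
definition real_analytic_on :: "(real^'d::finite \<Rightarrow> real^'e::finite) \<Rightarrow> (real^'d) set \<Rightarrow> bool" where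
  "real_analytic_on f U \<longleftrightarrow> (\<forall>x0\<in>U. \<exists>r>0. \<exists>a :: ('d \<Rightarrow> nat) \<Rightarrow> real^'e.
      \<forall>y\<in>ball x0 r. ((\<lambda>\<alpha>. (\<Prod>i\<in>UNIV. (y $ i - x0 $ i) ^ (\<alpha> i)) *\<^sub>R a \<alpha>) has_sum f y) UNIV)"

end

theory Submission
  imports Defs
begin

text \<open>In the coordinates of the basis \<open>v\<^sub>1, \<dots>, v\<^sub>d\<^sub>+\<^sub>1\<close> every \<open>A\<^sub>i\<close> becomes a matrix \<open>P\<^sub>i\<close>
  with strictly positive entries, since \<open>A\<^sub>i\<close> maps each \<open>v\<^sub>k\<close> into the interior of the cone.
  A point of \<open>V\<close> is the projectivisation of a nonnegative coordinate vector \<open>a\<close>, and up to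
  bounded changes of coordinates the differential of \<open>f\<^sub>w\<close> sends a tangent vector \<open>b\<close> to
  \<open>P\<^sub>w b\<close> reduced modulo the direction \<open>P\<^sub>w a\<close>. Its size is controlled by the oscillation of
  the ratios \<open>(P\<^sub>w b)\<^sub>j / (P\<^sub>w a)\<^sub>j\<close>, which every positive matrix shrinks by a fixed factor
  (Birkhoff's contraction of the Hilbert metric); this gives the exponential decay. Invariance of
  \<open>V\<close> is invariance of the cone, and each \<open>f\<^sub>A\<close> is analytic near \<open>V\<close> because it is a
  linear-fractional map whose denominator does not vanish there.\<close>

section \<open>Geometric series over words\<close>

lemma has_sum_group_by:
  fixes f :: "'a \<Rightarrow> 'c::banach" and g :: "'a \<Rightarrow> 'b"
  assumes "(f has_sum S) A" "\<And>y. finite {x\<in>A. g x = y}"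
  shows "((\<lambda>y. sum f {x\<in>A. g x = y}) has_sum S) UNIV"
proof -
  have inj: "inj_on (\<lambda>x. (g x, x)) A" by (auto simp: inj_on_def)
  have img: "(\<lambda>x. (g x, x)) ` A = Sigma UNIV (\<lambda>y. {x\<in>A. g x = y})" by auto
  have "((\<lambda>(y,x). f x) has_sum S) (Sigma UNIV (\<lambda>y. {x\<in>A. g x = y}))"
    using has_sum_reindex[OF inj, of "\<lambda>(y,x). f x" S] assms(1) img by (simp add: o_def)
  then show ?thesis
    by (rule has_sum_Sigma[OF isUCont_plus]) (use assms(2) in auto)
qed

lemma has_sum_Times_finite:
  fixes f :: "'a \<times> 'b \<Rightarrow> 'c::banach"
  assumes "finite A" "\<And>a. a\<in>A \<Longrightarrow> ((\<lambda>b. f (a,b)) has_sum s a) B"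
  shows "(f has_sum (\<Sum>a\<in>A. s a)) (A \<times> B)"
  using assms
proof (induction A rule: finite_induct)
  case empty then show ?case by simp
next
  case (insert a A)
  have "(f has_sum s a) (Pair a ` B)"
    using insert.prems[of a] by (subst has_sum_reindex) (auto simp: inj_on_def o_def)
  moreover have "(f has_sum (\<Sum>a\<in>A. s a)) (A \<times> B)" using insert by auto
  ultimately have "(f has_sum (s a + (\<Sum>a\<in>A. s a))) (Pair a ` B \<union> A \<times> B)"
    by (rule has_sum_Un_disjoint) (use insert.hyps in auto)
  moreover have "insert a A \<times> B = Pair a ` B \<union> A \<times> B" by auto
  ultimately show ?case using insert.hyps by simp
qed

lemma sum_prod_list_lists_length:
  fixes x :: "'d::finite \<Rightarrow> 'a::comm_semiring_1"
  shows "(\<Sum>w\<in>{w. length w = k}. prod_list (map x w)) = (sum x UNIV) ^ k"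
proof (induction k)
  case 0
  have "{w::'d list. length w = 0} = {[]}" by auto
  then show ?case by simp
next
  case (Suc k)
  have eq: "{w::'d list. length w = Suc k} = (\<lambda>(i,w). i#w) ` (UNIV \<times> {w. length w = k})"
    by (auto simp: length_Suc_conv)
  have inj: "inj_on (\<lambda>(i,w). i#w) (UNIV \<times> {w::'d list. length w = k})"
    by (auto simp: inj_on_def)
  have "(\<Sum>w\<in>{w::'d list. length w = Suc k}. prod_list (map x w))
      = (\<Sum>(i,w)\<in>UNIV \<times> {w::'d list. length w = k}. x i * prod_list (map x w))"
    unfolding eq sum.reindex[OF inj] by (simp add: case_prod_unfold)
  also have "\<dots> = (\<Sum>i\<in>UNIV. x i * (\<Sum>w\<in>{w::'d list. length w = k}. prod_list (map x w)))"
    by (simp add: sum.cartesian_product[symmetric] sum_distrib_left)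
  also have "\<dots> = (sum x UNIV) ^ Suc k"
    by (simp add: Suc sum_distrib_right[symmetric])
  finally show ?case .
qed

lemma summable_on_prod_list:
  fixes x :: "'d::finite \<Rightarrow> real"
  assumes "(\<Sum>i\<in>UNIV. \<bar>x i\<bar>) < 1"
  shows "(\<lambda>w. prod_list (map x w)) summable_on UNIV"
proof (rule abs_summable_summable, rule nonneg_bdd_above_summable_on)
  define s where "s = (\<Sum>i\<in>UNIV. \<bar>x i\<bar>)"
  have s: "0 \<le> s" "s < 1" using assms by (simp_all add: s_def sum_nonneg)
  show "bdd_above (sum (\<lambda>w. norm (prod_list (map x w))) ` {F. F \<subseteq> UNIV \<and> finite F})"
  proof (rule bdd_aboveI2)
    fix F :: "'d list set" assume "F \<in> {F. F \<subseteq> UNIV \<and> finite F}"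
    then have "finite F" by simp
    define N where "N = Max (length ` F)"
    have fin: "finite {w::'d list. length w \<le> N}"
      using finite_lists_length_le[of "UNIV::'d set" N] by simp
    have "F \<subseteq> {w. length w \<le> N}" using \<open>finite F\<close> by (auto simp: N_def)
    moreover have norm_prod: "norm (prod_list (map x w)) = prod_list (map (\<lambda>i. \<bar>x i\<bar>) w)" for w
      by (induction w) (auto simp: abs_mult)
    ultimately have "(\<Sum>w\<in>F. norm (prod_list (map x w)))
        \<le> (\<Sum>w\<in>{w. length w \<le> N}. prod_list (map (\<lambda>i. \<bar>x i\<bar>) w))"
      unfolding norm_prod by (intro sum_mono2[OF fin]) (auto intro!: prod_list_nonneg)
    also have "\<dots> = (\<Sum>k\<in>{..N}. \<Sum>w\<in>{w\<in>{w. length w \<le> N}. length w = k}. prod_list (map (\<lambda>i. \<bar>x i\<bar>) w))"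
      by (subst sum.group[OF fin, of "{..N}" length, symmetric]) auto
    also have "\<dots> = (\<Sum>k\<in>{..N}. \<Sum>w\<in>{w. length w = k}. prod_list (map (\<lambda>i. \<bar>x i\<bar>) w))"
      by (intro sum.cong refl arg_cong2[where f=sum]) auto
    also have "\<dots> = (\<Sum>k\<in>{..N}. s ^ k)"
      by (simp add: sum_prod_list_lists_length s_def)
    also have "\<dots> \<le> (\<Sum>k. s ^ k)"
      using s summable_geometric[of s] by (intro sum_le_suminf) auto
    finally show "(\<Sum>w\<in>F. norm (prod_list (map x w))) \<le> (\<Sum>k. s ^ k)" .
  qed
qed auto

lemma has_sum_prod_list_geometric:
  fixes x :: "'d::finite \<Rightarrow> real"
  assumes "(\<Sum>i\<in>UNIV. \<bar>x i\<bar>) < 1"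
  shows "((\<lambda>w. prod_list (map x w)) has_sum (1 / (1 - sum x UNIV))) UNIV"
proof -
  obtain S where S: "((\<lambda>w. prod_list (map x w)) has_sum S) UNIV"
    using summable_on_prod_list[OF assms] has_sum_infsum by blast
  have "((\<lambda>k. sum (\<lambda>w. prod_list (map x w)) {w\<in>UNIV. length w = k}) has_sum S) UNIV"
    using finite_lists_length_eq[of "UNIV::'d set"] by (intro has_sum_group_by[OF S]) simp
  then have "(\<lambda>k. (sum x UNIV) ^ k) sums S"
    by (intro has_sum_imp_sums) (simp add: sum_prod_list_lists_length)
  moreover have "\<bar>sum x UNIV\<bar> < 1"
    using sum_abs[of x UNIV] assms by linarith
  then have "(\<lambda>k. (sum x UNIV) ^ k) sums (1 / (1 - sum x UNIV))"
    by (intro geometric_sums) simp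
  ultimately show ?thesis using S sums_unique2 by metis
qed

lemma prod_list_map_eq_prod_count:
  fixes h :: "'d::finite \<Rightarrow> 'a::comm_monoid_mult"
  shows "prod_list (map h w) = (\<Prod>i\<in>UNIV. h i ^ count_list w i)"
proof (induction w)
  case (Cons a w)
  have "(\<Prod>i\<in>UNIV. h i ^ count_list (a # w) i)
      = (\<Prod>i\<in>UNIV. (if a = i then h i else 1) * h i ^ count_list w i)"
    by (intro prod.cong) auto
  also have "\<dots> = h a * (\<Prod>i\<in>UNIV. h i ^ count_list w i)"
    by (simp add: prod.distrib prod.delta)
  finally show ?case using Cons by simp
qed simp

lemma prod_list_map_mult:
  fixes f g :: "'a \<Rightarrow> 'b::comm_monoid_mult"
  shows "prod_list (map (\<lambda>i. f i * g i) w) = prod_list (map f w) * prod_list (map g w)"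
  by (induction w) (auto simp: mult_ac)

lemma sum_option_UNIV:
  "(\<Sum>z\<in>(UNIV::'a::finite option set). f z) = f None + (\<Sum>i\<in>UNIV. f (Some i))"
  by (simp add: UNIV_option_conv sum.reindex)

text \<open>Expand \<open>1/(d + \<beta>\<cdot>h)\<close> as a geometric series over words \<open>w\<close> in the coordinates of
  \<open>h = y - x0\<close>, distribute it over the terms of the numerator, and collect equal monomials.\<close>

lemma power_series_linear_fractional:
  fixes p :: "'b::banach" and g :: "'d::finite \<Rightarrow> 'b" and x0 :: "real^'d"
  assumes "d \<noteq> 0"
  shows "\<exists>r>0. \<exists>a :: ('d \<Rightarrow> nat) \<Rightarrow> 'b. \<forall>y\<in>ball x0 r.
    ((\<lambda>\<alpha>. (\<Prod>i\<in>UNIV. (y $ i - x0 $ i) ^ \<alpha> i) *\<^sub>R a \<alpha>) has_sum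
      (1 / (d + (\<Sum>i\<in>UNIV. \<beta> i * (y $ i - x0 $ i)))) *\<^sub>R (p + (\<Sum>i\<in>UNIV. (y $ i - x0 $ i) *\<^sub>R g i))) UNIV"
proof -
  define B where "B = (\<Sum>i\<in>UNIV. \<bar>\<beta> i\<bar>)"
  define r where "r = \<bar>d\<bar> / (B + 1)"
  have "B \<ge> 0" by (simp add: B_def sum_nonneg)
  then have "r > 0" using assms by (simp add: r_def)
  define word :: "'d option \<times> 'd list \<Rightarrow> 'd list" where
    "word t = (case fst t of None \<Rightarrow> snd t | Some k \<Rightarrow> k # snd t)" for t
  define c :: "'d option \<times> 'd list \<Rightarrow> 'b" where
    "c t = (1 / d * prod_list (map (\<lambda>i. - \<beta> i / d) (snd t))) *\<^sub>R
       (case fst t of None \<Rightarrow> p | Some k \<Rightarrow> g k)" for t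
  define a where "a \<alpha> = sum c {t. count_list (word t) = \<alpha>}" for \<alpha>
  have finite_fibres: "finite {t. count_list (word t) = \<alpha>}" for \<alpha>
  proof (rule finite_subset)
    show "{t. count_list (word t) = \<alpha>} \<subseteq> UNIV \<times> {w. length w \<le> sum \<alpha> UNIV}"
    proof -
      have "length (snd t) \<le> sum (count_list (word t)) UNIV" for t
        by (simp add: sum_count_set word_def split: option.splits)
      then show ?thesis by force
    qed
    show "finite ((UNIV :: 'd option set) \<times> {w::'d list. length w \<le> sum \<alpha> UNIV})"
      using finite_lists_length_le[of "UNIV::'d set"] by (intro finite_cartesian_product) simp_all
  qed
  show ?thesis
  proof (intro exI[of _ r] conjI \<open>r > 0\<close> exI[of _ a] ballI)
    fix y assume y: "y \<in> ball x0 r"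
    define h where "h i = y $ i - x0 $ i" for i
    define x where "x i = - \<beta> i / d * h i" for i
    have "\<bar>h i\<bar> \<le> r" for i
      using component_le_norm_cart[of "y - x0" i] y by (simp add: h_def dist_norm norm_minus_commute)
    then have "(\<Sum>i\<in>UNIV. \<bar>x i\<bar>) \<le> B * r / \<bar>d\<bar>"
      unfolding B_def sum_distrib_right sum_divide_distrib
      by (intro sum_mono) (auto simp: x_def abs_mult intro!: mult_left_mono divide_right_mono)
    also have "\<dots> < 1" using \<open>B \<ge> 0\<close> assms by (simp add: r_def)
    finally have x_small: "(\<Sum>i\<in>UNIV. \<bar>x i\<bar>) < 1" .
    have denom: "d + (\<Sum>i\<in>UNIV. \<beta> i * h i) = d * (1 - sum x UNIV)"
      using assms by (simp add: x_def algebra_simps sum_distrib_left sum_negf)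
    define u where "u t = (case t of None \<Rightarrow> p | Some k \<Rightarrow> h k *\<^sub>R g k)" for t
    have "((\<lambda>w. (1 / d * prod_list (map x w)) *\<^sub>R u t) has_sum
        ((1 / d * (1 / (1 - sum x UNIV))) *\<^sub>R u t)) UNIV" for t
      using has_sum_bounded_linear[OF bounded_linear_scaleR_left[of "u t"]
          has_sum_cmult_right[OF has_sum_prod_list_geometric[OF x_small], of "1 / d"]] by simp
    then have "((\<lambda>(t, w). (1 / d * prod_list (map x w)) *\<^sub>R u t) has_sum
        (\<Sum>t\<in>UNIV. (1 / d * (1 / (1 - sum x UNIV))) *\<^sub>R u t)) (UNIV \<times> UNIV)"
      by (intro has_sum_Times_finite) auto
    moreover have "(1 / d * prod_list (map x w)) *\<^sub>R u t
        = (\<Prod>i\<in>UNIV. h i ^ count_list (word (t, w)) i) *\<^sub>R c (t, w)" for t w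
    proof -
      have "prod_list (map x w) = prod_list (map (\<lambda>i. - \<beta> i / d) w) * prod_list (map h w)"
        unfolding x_def[abs_def] by (rule prod_list_map_mult)
      then show ?thesis
        by (simp add: u_def word_def c_def prod_list_map_eq_prod_count[symmetric] split: option.splits)
    qed
    moreover have "(\<Sum>t\<in>UNIV. (1 / d * (1 / (1 - sum x UNIV))) *\<^sub>R u t)
        = (1 / (d + (\<Sum>i\<in>UNIV. \<beta> i * h i))) *\<^sub>R (p + (\<Sum>i\<in>UNIV. h i *\<^sub>R g i))"
      by (simp add: denom sum_option_UNIV u_def scaleR_add_right scaleR_sum_right)
    ultimately have "((\<lambda>t. (\<Prod>i\<in>UNIV. h i ^ count_list (word t) i) *\<^sub>R c t) has_sum
        (1 / (d + (\<Sum>i\<in>UNIV. \<beta> i * h i))) *\<^sub>R (p + (\<Sum>i\<in>UNIV. h i *\<^sub>R g i))) UNIV"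
      by (simp add: case_prod_unfold)
    from has_sum_group_by[OF this, of "\<lambda>t. count_list (word t)"]
    show "((\<lambda>\<alpha>. (\<Prod>i\<in>UNIV. (y $ i - x0 $ i) ^ \<alpha> i) *\<^sub>R a \<alpha>) has_sum
      (1 / (d + (\<Sum>i\<in>UNIV. \<beta> i * (y $ i - x0 $ i)))) *\<^sub>R (p + (\<Sum>i\<in>UNIV. (y $ i - x0 $ i) *\<^sub>R g i))) UNIV"
      using finite_fibres by (simp add: a_def h_def scaleR_sum_right)
  qed
qed

section \<open>Homogeneous coordinates and the projective action\<close>

lemma lift1_nth [simp]: "lift1 x $ None = 1" "lift1 x $ Some i = x $ i"
  by (simp_all add: lift1_def)

lemma projd_nth [simp]: "projd y $ i = y $ Some i"
  by (simp add: projd_def)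

lemma lift1_projd: "y $ None = 1 \<Longrightarrow> lift1 (projd y) = y"
  by (auto simp: vec_eq_iff lift1_def split: option.splits)

lemma matrix_vector_mult_lift1:
  "(M *v lift1 y) $ j = M $ j $ None + (\<Sum>i\<in>UNIV. M $ j $ Some i * y $ i)"
  by (simp add: matrix_vector_mult_def sum_option_UNIV)

definition lift0 :: "real^'d::finite \<Rightarrow> real^('d option)" where
  "lift0 h = (\<chi> j. case j of None \<Rightarrow> 0 | Some i \<Rightarrow> h $ i)"

lemma lift0_nth [simp]: "lift0 h $ None = 0" "lift0 h $ Some i = h $ i"
  by (simp_all add: lift0_def)

lemma linear_lift0: "linear lift0"
  by (rule linearI) (auto simp: vec_eq_iff lift0_def split: option.splits)

lemma bounded_linear_projd: "bounded_linear projd"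
  by (rule linearI[THEN linear_conv_bounded_linear[THEN iffD1]]) (auto simp: vec_eq_iff)

lemma bounded_linear_projd_mult: "bounded_linear (\<lambda>y. projd (M *v y))"
  using bounded_linear_compose[OF bounded_linear_projd matrix_vector_mul_bounded_linear[of M]] .

lemma bounded_linear_mult_lift0: "bounded_linear (\<lambda>h. M *v lift0 h)"
  using linear_compose[OF linear_lift0 matrix_vector_mul_linear[of M]]
  by (simp add: o_def linear_conv_bounded_linear)

lemma open_fA_denominator_nonzero: "open {x. (M *v lift1 x) $ None \<noteq> 0}"
  unfolding matrix_vector_mult_lift1 by (intro open_Collect_neq continuous_intros)

lemma real_analytic_on_subset: "real_analytic_on f U \<Longrightarrow> V \<subseteq> U \<Longrightarrow> real_analytic_on f V"
  unfolding real_analytic_on_def by blast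

lemma real_analytic_on_fA: "real_analytic_on (fA M) {x. (M *v lift1 x) $ None \<noteq> 0}"
  unfolding real_analytic_on_def
proof
  fix x0 assume "x0 \<in> {x. (M *v lift1 x) $ None \<noteq> 0}"
  then have d: "(M *v lift1 x0) $ None \<noteq> 0" by simp
  define g where "g i = (\<chi> j. M $ Some j $ Some i)" for i
  have affine: "(M *v lift1 y) $ j = (M *v lift1 x0) $ j + (\<Sum>i\<in>UNIV. M $ j $ Some i * (y $ i - x0 $ i))"
    for y j by (simp add: matrix_vector_mult_lift1 algebra_simps sum_subtractf)
  have fA: "fA M y = (1 / ((M *v lift1 x0) $ None + (\<Sum>i\<in>UNIV. M $ None $ Some i * (y $ i - x0 $ i))))
      *\<^sub>R (projd (M *v lift1 x0) + (\<Sum>i\<in>UNIV. (y $ i - x0 $ i) *\<^sub>R g i))" for y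
  proof -
    have "fA M y $ j = (1 / (M *v lift1 y) $ None) * (M *v lift1 y) $ Some j" for j
      by (simp add: fA_def)
    then show ?thesis
      unfolding vec_eq_iff affine[of y] by (simp add: g_def mult.commute scaleR_sum_right)
  qed
  obtain r a where "r > 0" and a: "\<forall>y\<in>ball x0 r.
      ((\<lambda>\<alpha>. (\<Prod>i\<in>UNIV. (y $ i - x0 $ i) ^ \<alpha> i) *\<^sub>R a \<alpha>) has_sum
      (1 / ((M *v lift1 x0) $ None + (\<Sum>i\<in>UNIV. M $ None $ Some i * (y $ i - x0 $ i))))
        *\<^sub>R (projd (M *v lift1 x0) + (\<Sum>i\<in>UNIV. (y $ i - x0 $ i) *\<^sub>R g i))) UNIV"
    using power_series_linear_fractional[OF d, where \<beta> = "\<lambda>i. M $ None $ Some i"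
        and p = "projd (M *v lift1 x0)" and g = g] by blast
  then show "\<exists>r>0. \<exists>a. \<forall>y\<in>ball x0 r.
      ((\<lambda>\<alpha>. (\<Prod>i\<in>UNIV. (y $ i - x0 $ i) ^ \<alpha> i) *\<^sub>R a \<alpha>) has_sum fA M y) UNIV"
    unfolding fA by blast
qed

definition dfA :: "real^('d::finite option)^('d option) \<Rightarrow> real^'d \<Rightarrow> real^'d \<Rightarrow> real^'d" where
  "dfA M x h = projd ((1 / (M *v lift1 x) $ None) *\<^sub>R
     (M *v lift0 h - ((M *v lift0 h) $ None / (M *v lift1 x) $ None) *\<^sub>R (M *v lift1 x)))"

lemma has_derivative_fA:
  assumes d: "(M *v lift1 x) $ None \<noteq> 0"
  shows "(fA M has_derivative dfA M x) (at x)"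
proof -
  have "((\<lambda>y. M *v lift0 y + M *v lift1 0) has_derivative (\<lambda>h. M *v lift0 h)) (at x)"
    by (intro has_derivative_add_const bounded_linear_imp_has_derivative bounded_linear_mult_lift0)
  moreover have "(\<lambda>y. M *v lift0 y + M *v lift1 0) = (\<lambda>y. M *v lift1 y)"
    by (simp add: fun_eq_iff vec_eq_iff matrix_vector_mult_lift1 matrix_vector_mult_def sum_option_UNIV)
  ultimately have N: "((\<lambda>y. M *v lift1 y) has_derivative (\<lambda>h. M *v lift0 h)) (at x)"
    by simp
  have "((\<lambda>y. projd (inverse ((M *v lift1 y) $ None) *\<^sub>R (M *v lift1 y))) has_derivative
      (\<lambda>h. projd (inverse ((M *v lift1 x) $ None) *\<^sub>R (M *v lift0 h) +
          (- (inverse ((M *v lift1 x) $ None) * (M *v lift0 h) $ None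
              * inverse ((M *v lift1 x) $ None))) *\<^sub>R (M *v lift1 x)))) (at x)"
    using Deriv.has_derivative_inverse[OF d bounded_linear.has_derivative[OF bounded_linear_vec_nth N]]
    by (intro bounded_linear.has_derivative[OF bounded_linear_projd] has_derivative_scaleR N)
  moreover have "(\<lambda>y. projd (inverse ((M *v lift1 y) $ None) *\<^sub>R (M *v lift1 y))) = fA M"
    by (auto simp: fA_def divide_inverse)
  moreover have "(\<lambda>h. projd (inverse ((M *v lift1 x) $ None) *\<^sub>R (M *v lift0 h) +
          (- (inverse ((M *v lift1 x) $ None) * (M *v lift0 h) $ None
              * inverse ((M *v lift1 x) $ None))) *\<^sub>R (M *v lift1 x))) = dfA M x"
    by (auto simp: dfA_def vec_eq_iff field_simps power2_eq_square)
  ultimately show ?thesis by simp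
qed

lemma dfA_in_coords:
  assumes "B *v lift1 x = T *v q" "B *v lift0 h = T *v c"
  shows "dfA B x h = (1 / (T *v q) $ None) *\<^sub>R
    projd (T *v (c - ((T *v c) $ None / (T *v q) $ None) *\<^sub>R q))"
  by (simp add: dfA_def assms vec_eq_iff matrix_vector_mult_diff_distrib matrix_vector_mult_scaleR)

lemma lift1_fA:
  "(M *v lift1 y) $ None \<noteq> 0 \<Longrightarrow> lift1 (fA M y) = (1 / (M *v lift1 y) $ None) *\<^sub>R (M *v lift1 y)"
  by (auto simp: fA_def vec_eq_iff lift1_def split: option.splits)

lemma fA_fA:
  assumes "(B *v lift1 y) $ None \<noteq> 0"
  shows "fA A (fA B y) = fA (A ** B) y"
proof -
  have "A *v lift1 (fA B y) = (1 / (B *v lift1 y) $ None) *\<^sub>R ((A ** B) *v lift1 y)"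
    using assms by (simp add: lift1_fA matrix_vector_mult_scaleR matrix_vector_mul_assoc)
  then show ?thesis
    using assms by (simp add: fA_def)
qed

definition word_matrix :: "('i \<Rightarrow> 'a::semiring_1^'n^'n) \<Rightarrow> 'i list \<Rightarrow> 'a^'n^'n" where
  "word_matrix A ws = foldr (\<lambda>i M. A i ** M) ws (mat 1)"

lemma word_matrix_simps [simp]:
  "word_matrix A [] = mat 1" "word_matrix A (i # ws) = A i ** word_matrix A ws"
  by (simp_all add: word_matrix_def)

lemma fword_simps [simp]: "fword A [] = id" "fword A (i # ws) = fA (A i) \<circ> fword A ws"
  by (simp_all add: fword_def)

lemma fword_eq_fA_word_matrix:
  assumes "\<forall>k\<le>length ws. (word_matrix A (drop k ws) *v lift1 y) $ None \<noteq> 0"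
  shows "fword A ws y = fA (word_matrix A ws) y"
  using assms
proof (induction ws)
  case Nil
  show ?case by (simp add: fA_def vec_eq_iff)
next
  case (Cons i ws)
  have "fword A ws y = fA (word_matrix A ws) y"
    using Cons.prems[rule_format, of "Suc k" for k] by (intro Cons.IH) simp
  moreover have "(word_matrix A ws *v lift1 y) $ None \<noteq> 0"
    using Cons.prems[rule_format, of 1] by simp
  ultimately show ?case by (simp add: fA_fA matrix_mul_assoc)
qed

lemma has_derivative_fword:
  assumes "\<forall>k\<le>length ws. (word_matrix A (drop k ws) *v lift1 x) $ None \<noteq> 0"
  shows "(fword A ws has_derivative dfA (word_matrix A ws) x) (at x)"
proof (rule has_derivative_transform_within_open)
  let ?G = "\<Inter>k\<in>{..length ws}. {y. (word_matrix A (drop k ws) *v lift1 y) $ None \<noteq> 0}"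
  show "(fA (word_matrix A ws) has_derivative dfA (word_matrix A ws) x) (at x)"
    using assms[rule_format, of 0] by (intro has_derivative_fA) simp
  show "open ?G" by (simp add: open_INT open_fA_denominator_nonzero)
  show "x \<in> ?G" using assms by simp
  show "\<And>y. y \<in> ?G \<Longrightarrow> fA (word_matrix A ws) y = fword A ws y"
    by (simp add: fword_eq_fA_word_matrix)
qed

section \<open>Simplicial cones\<close>

definition cone_matrix :: "('n::finite \<Rightarrow> real^'n) \<Rightarrow> real^'n^'n" where
  "cone_matrix v = (\<chi> i j. v j $ i)"

lemma cone_matrix_mult: "cone_matrix v *v c = (\<Sum>k\<in>UNIV. c $ k *\<^sub>R v k)"
  by (simp add: vec_eq_iff cone_matrix_def matrix_vector_mult_def mult.commute)

lemma cone_matrix_axis: "cone_matrix v *v axis k 1 = v k"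
proof -
  have "cone_matrix v *v axis k 1 = (\<Sum>j\<in>UNIV. if j = k then v j else 0)"
    unfolding cone_matrix_mult by (intro sum.cong) (auto simp: axis_def)
  then show ?thesis by simp
qed

lemma invertible_cone_matrix:
  assumes "inj v" "independent (range v)"
  shows "invertible (cone_matrix v)"
proof -
  have "c = 0" if "cone_matrix v *v c = 0" for c
  proof (rule ccontr)
    assume "c \<noteq> 0"
    then obtain k where "c $ k \<noteq> 0" by (auto simp: vec_eq_iff)
    have "(\<Sum>y\<in>range v. c $ inv v y *\<^sub>R y) = (\<Sum>k\<in>UNIV. c $ k *\<^sub>R v k)"
      using assms(1) by (simp add: sum.reindex)
    also have "\<dots> = 0" using that by (simp add: cone_matrix_mult)
    moreover have "c $ inv v (v k) \<noteq> 0" using \<open>c $ k \<noteq> 0\<close> assms(1) by simp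
    ultimately have "dependent (range v)"
      by (subst real_vector.dependent_finite) (auto intro!: exI[of _ "\<lambda>y. c $ inv v y"])
    then show False using assms(2) by simp
  qed
  then show ?thesis
    using matrix_left_invertible_ker invertible_left_inverse by blast
qed

lemma simp_cone_eq_image:
  fixes v :: "'d::finite option \<Rightarrow> real^('d option)"
  shows "simp_cone v = {cone_matrix v *v c | c. \<forall>k. 0 \<le> c $ k}"
proof safe
  fix y assume "y \<in> simp_cone v"
  then obtain c where "\<forall>k. c k \<ge> 0" "y = (\<Sum>k\<in>UNIV. c k *\<^sub>R v k)"
    by (auto simp: simp_cone_def)
  then show "\<exists>c. y = cone_matrix v *v c \<and> (\<forall>k. 0 \<le> c $ k)"
    by (intro exI[of _ "\<chi> k. c k"]) (simp add: cone_matrix_mult)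
next
  fix c :: "real^('d option)" assume "\<forall>k. 0 \<le> c $ k"
  then show "cone_matrix v *v c \<in> simp_cone v"
    unfolding simp_cone_def cone_matrix_mult by (intro CollectI exI[of _ "\<lambda>k. c $ k"]) auto
qed

lemma simp_cone_scaleR:
  assumes "0 \<le> s" "y \<in> simp_cone v"
  shows "s *\<^sub>R y \<in> simp_cone v"
proof -
  obtain c where "\<forall>k. 0 \<le> c k" "y = (\<Sum>k\<in>UNIV. c k *\<^sub>R v k)"
    using assms(2) by (auto simp: simp_cone_def)
  with assms(1) show ?thesis
    unfolding simp_cone_def by (auto simp: scaleR_sum_right intro!: exI[of _ "\<lambda>k. s * c k"])
qed

text \<open>Moving from an interior point a little towards \<open>-(v\<^sub>1 + \<dots> + v\<^sub>d\<^sub>+\<^sub>1)\<close> stays in the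
  cone, so all coordinates of the point exceed that small step.\<close>

lemma interior_simp_cone_coords:
  fixes v :: "'d::finite option \<Rightarrow> real^('d option)"
  assumes "inj v" "independent (range v)" "y \<in> interior (simp_cone v)"
  shows "\<exists>p. (\<forall>j. 0 < p $ j) \<and> y = cone_matrix v *v p"
proof -
  obtain e where e: "e > 0" "ball y e \<subseteq> simp_cone v"
    using assms(3) mem_interior by blast
  define one :: "real^('d option)" where "one = (\<chi> k. 1)"
  define u where "u = cone_matrix v *v one"
  have "u \<noteq> 0"
    using invertible_cone_matrix[OF assms(1,2)]
    by (metis invertible_def matrix_vector_mul_assoc matrix_vector_mul_lid matrix_vector_mult_0_right
        one_def vec_lambda_beta zero_index zero_neq_one u_def)
  define t where "t = e / (2 * norm u)"
  have "t > 0" using e \<open>u \<noteq> 0\<close> by (simp add: t_def)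
  have "y - t *\<^sub>R u \<in> ball y e"
    using e \<open>u \<noteq> 0\<close> by (simp add: dist_norm t_def)
  then have "y - t *\<^sub>R u \<in> simp_cone v" using e(2) by blast
  then obtain c where c: "\<forall>k. 0 \<le> c $ k" "y - t *\<^sub>R u = cone_matrix v *v c"
    by (auto simp: simp_cone_eq_image)
  have "y = cone_matrix v *v (c + t *\<^sub>R one)"
    using c(2) by (simp add: u_def matrix_vector_right_distrib matrix_vector_mult_scaleR algebra_simps)
  moreover have "\<forall>j. 0 < (c + t *\<^sub>R one) $ j"
    using c(1) \<open>t > 0\<close> by (simp add: one_def add_nonneg_pos)
  ultimately show ?thesis by blast
qed

section \<open>Birkhoff contraction for positive matrices\<close>

text \<open>\<open>osc_le q c E\<close>: the ratios \<open>c\<^sub>j / q\<^sub>j\<close> range over an interval of length at most \<open>E\<close>,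
  written without division so that zero entries of \<open>q\<close> are allowed. Positive matrices shrink
  this oscillation by a fixed factor, which is Birkhoff's contraction of the Hilbert metric.\<close>

definition osc_le :: "real^'n::finite \<Rightarrow> real^'n \<Rightarrow> real \<Rightarrow> bool" where
  "osc_le q c E \<longleftrightarrow> (\<exists>m. \<forall>j. m * q $ j \<le> c $ j \<and> c $ j \<le> (m + E) * q $ j)"

lemma matrix_vector_mult_nth: "(P *v q) $ j = (\<Sum>k\<in>UNIV. P $ j $ k * q $ k)"
  by (simp add: matrix_vector_mult_def)

lemma positive_matrix_mult_ge:
  fixes P :: "real^'n::finite^'m"
  assumes "\<And>j k. pmin \<le> P $ j $ k" "\<And>k. 0 \<le> q $ k"
  shows "pmin * (\<Sum>k\<in>UNIV. q $ k) \<le> (P *v q) $ j"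
  unfolding matrix_vector_mult_nth sum_distrib_left using assms by (intro sum_mono mult_right_mono) auto

lemma positive_matrix_mult_le:
  fixes P :: "real^'n::finite^'m"
  assumes "\<And>j k. P $ j $ k \<le> pmax" "\<And>k. 0 \<le> q $ k"
  shows "(P *v q) $ j \<le> pmax * (\<Sum>k\<in>UNIV. q $ k)"
  unfolding matrix_vector_mult_nth sum_distrib_left using assms by (intro sum_mono mult_right_mono) auto

text \<open>The excess \<open>S\<close> of \<open>c\<close> over the lower bound \<open>m q\<close> is spread by \<open>P\<close> over all coordinates,
  which raises the lower bound by \<open>\<rho> S / \<Sum>q\<close>.\<close>

lemma positive_matrix_raises_lower_bound:
  fixes P :: "real^'n::finite^'n"
  assumes P: "\<And>j k. pmin \<le> P $ j $ k" "\<And>j k. P $ j $ k \<le> pmax"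
    and \<rho>: "0 \<le> \<rho>" "\<rho> * pmax \<le> pmin"
    and q: "\<And>k. 0 \<le> q $ k" "0 < (\<Sum>k\<in>UNIV. q $ k)"
    and lower: "\<And>k. m * q $ k \<le> c $ k"
  shows "(m + \<rho> * (\<Sum>k\<in>UNIV. c $ k - m * q $ k) / (\<Sum>k\<in>UNIV. q $ k)) * (P *v q) $ j \<le> (P *v c) $ j"
proof -
  define S where "S = (\<Sum>k\<in>UNIV. c $ k - m * q $ k)"
  define \<alpha> where "\<alpha> = (\<Sum>k\<in>UNIV. q $ k)"
  have "0 \<le> S" unfolding S_def using lower by (intro sum_nonneg) (simp add: algebra_simps)
  have "\<rho> * S / \<alpha> * (P *v q) $ j \<le> \<rho> * S / \<alpha> * (pmax * \<alpha>)"
    using positive_matrix_mult_le[OF P(2) q(1)] \<rho> \<open>0 \<le> S\<close> q(2)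
    by (intro mult_left_mono) (auto simp: \<alpha>_def)
  also have "\<dots> = (\<rho> * pmax) * S" using q(2) by (simp add: \<alpha>_def)
  also have "\<dots> \<le> pmin * S" using \<rho> \<open>0 \<le> S\<close> by (intro mult_right_mono) auto
  also have "\<dots> \<le> (\<Sum>k\<in>UNIV. P $ j $ k * (c $ k - m * q $ k))"
    unfolding S_def sum_distrib_left using P(1) lower
    by (intro sum_mono mult_right_mono) (auto simp: algebra_simps)
  also have "\<dots> = (P *v c) $ j - m * (P *v q) $ j"
    by (simp add: matrix_vector_mult_nth sum_subtractf sum_distrib_left algebra_simps)
  finally show ?thesis by (simp add: S_def \<alpha>_def algebra_simps)
qed

lemma osc_le_mult_positive:
  fixes P :: "real^'n::finite^'n"
  assumes P: "\<And>j k. pmin \<le> P $ j $ k" "\<And>j k. P $ j $ k \<le> pmax"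
    and \<rho>: "0 \<le> \<rho>" "\<rho> * pmax \<le> pmin"
    and q: "\<And>k. 0 \<le> q $ k" and osc: "osc_le q c E"
  shows "osc_le (P *v q) (P *v c) ((1 - \<rho>) * E)"
proof (cases "(\<Sum>k\<in>UNIV. q $ k) = 0")
  case True
  then have "q = 0" using q by (simp add: vec_eq_iff sum_nonneg_eq_0_iff)
  moreover from osc have "c = 0" unfolding osc_le_def \<open>q = 0\<close> by (auto simp: vec_eq_iff intro: antisym)
  ultimately show ?thesis by (simp add: osc_le_def)
next
  case False
  then have q': "0 < (\<Sum>k\<in>UNIV. q $ k)" using q by (simp add: less_le sum_nonneg)
  obtain m where m: "\<And>j. m * q $ j \<le> c $ j" "\<And>j. c $ j \<le> (m + E) * q $ j"
    using osc unfolding osc_le_def by blast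
  define \<alpha> where "\<alpha> = (\<Sum>k\<in>UNIV. q $ k)"
  define S where "S = (\<Sum>k\<in>UNIV. c $ k - m * q $ k)"
  \<comment> \<open>The upper bound for \<open>c\<close> is a lower bound for \<open>-c\<close>.\<close>
  have "(\<Sum>k\<in>UNIV. - c $ k - - (m + E) * q $ k) = E * \<alpha> - S"
    by (simp add: S_def \<alpha>_def sum_subtractf sum_distrib_left algebra_simps sum.distrib)
  moreover have "- (m + E) * q $ k \<le> - c $ k" for k using m(2)[of k] by (simp add: algebra_simps)
  ultimately have raised: "(- (m + E) + \<rho> * (E * \<alpha> - S) / \<alpha>) * (P *v q) $ j \<le> (P *v - c) $ j" for j
    using positive_matrix_raises_lower_bound[OF P \<rho> q q', of "- (m + E)" "- c"] by (simp add: \<alpha>_def)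
  have "- (m + E) + \<rho> * (E * \<alpha> - S) / \<alpha> = - (m + \<rho> * S / \<alpha> + (1 - \<rho>) * E)"
    using q' by (simp add: \<alpha>_def field_simps)
  moreover have "(P *v - c) $ j = - (P *v c) $ j" for j
    by (simp add: matrix_vector_mult_nth sum_negf)
  ultimately have "- (m + \<rho> * S / \<alpha> + (1 - \<rho>) * E) * (P *v q) $ j \<le> - (P *v c) $ j" for j
    using raised[of j] by (simp only:)
  then have "(P *v c) $ j \<le> (m + \<rho> * S / \<alpha> + (1 - \<rho>) * E) * (P *v q) $ j" for j
    by (simp only: mult_minus_left neg_le_iff_le)
  moreover have "(m + \<rho> * S / \<alpha>) * (P *v q) $ j \<le> (P *v c) $ j" for j
    using positive_matrix_raises_lower_bound[OF P \<rho> q q' m(1)] by (simp add: S_def \<alpha>_def)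
  ultimately show ?thesis
    unfolding osc_le_def by blast
qed

lemma osc_le_mult_positive_initial:
  fixes P :: "real^'n::finite^'n"
  assumes P: "\<And>j k. pmin \<le> P $ j $ k" "\<And>j k. P $ j $ k \<le> pmax" and "0 < pmin"
    and a: "\<And>k. 0 \<le> a $ k" "0 < sa" "sa \<le> (\<Sum>k\<in>UNIV. a $ k)"
  shows "osc_le (P *v a) (P *v b) (2 * pmax * (\<Sum>k\<in>UNIV. \<bar>b $ k\<bar>) / (pmin * sa))"
proof -
  define K where "K = pmax * (\<Sum>k\<in>UNIV. \<bar>b $ k\<bar>) / (pmin * sa)"
  have bound: "\<bar>(P *v b) $ j\<bar> \<le> K * (P *v a) $ j" for j
  proof -
    have "0 < pmax" using P[of undefined undefined] \<open>0 < pmin\<close> by linarith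
    then have "0 \<le> K" using \<open>0 < pmin\<close> a by (simp add: K_def sum_nonneg)
    have "\<bar>(P *v b) $ j\<bar> \<le> (\<Sum>k\<in>UNIV. P $ j $ k * \<bar>b $ k\<bar>)"
      unfolding matrix_vector_mult_nth using P(1) \<open>0 < pmin\<close>
      by (intro order.trans[OF sum_abs] sum_mono) (simp add: abs_mult order.trans[OF less_imp_le])
    also have "\<dots> \<le> pmax * (\<Sum>k\<in>UNIV. \<bar>b $ k\<bar>)"
      using positive_matrix_mult_le[OF P(2), of "\<chi> k. \<bar>b $ k\<bar>"] by (simp add: matrix_vector_mult_nth)
    also have "\<dots> = K * (pmin * sa)" using \<open>0 < pmin\<close> a(2) by (simp add: K_def)
    also have "\<dots> \<le> K * (P *v a) $ j"
      using positive_matrix_mult_ge[OF P(1) a(1)] a(3) \<open>0 < pmin\<close> \<open>0 \<le> K\<close>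
      by (intro mult_left_mono) (auto intro: order.trans[OF mult_left_mono])
    finally show ?thesis .
  qed
  have "- K * (P *v a) $ j \<le> (P *v b) $ j \<and> (P *v b) $ j \<le> (- K + 2 * K) * (P *v a) $ j" for j
    using bound[of j] by (simp add: abs_le_iff)
  moreover have "2 * K = 2 * pmax * (\<Sum>k\<in>UNIV. \<bar>b $ k\<bar>) / (pmin * sa)" by (simp add: K_def)
  ultimately show ?thesis
    unfolding osc_le_def by metis
qed

lemma sum_abs_sub_ratio_le_osc:
  fixes q c w :: "real^'n::finite"
  assumes q: "\<And>k. 0 \<le> q $ k" and w: "\<And>k. 0 \<le> w $ k" "0 < (\<Sum>k\<in>UNIV. w $ k * q $ k)"
    and osc: "osc_le q c E"
  shows "(\<Sum>j\<in>UNIV. \<bar>c $ j - (\<Sum>k\<in>UNIV. w $ k * c $ k) / (\<Sum>k\<in>UNIV. w $ k * q $ k) * q $ j\<bar>)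
    \<le> E * (\<Sum>j\<in>UNIV. q $ j)"
proof -
  obtain m where m: "\<And>j. m * q $ j \<le> c $ j" "\<And>j. c $ j \<le> (m + E) * q $ j"
    using osc unfolding osc_le_def by blast
  define t where "t = (\<Sum>k\<in>UNIV. w $ k * c $ k) / (\<Sum>k\<in>UNIV. w $ k * q $ k)"
  have "m * (\<Sum>k\<in>UNIV. w $ k * q $ k) \<le> (\<Sum>k\<in>UNIV. w $ k * c $ k)"
    unfolding sum_distrib_left using m(1) w(1) by (intro sum_mono) (metis mult.left_commute mult_left_mono)
  then have "m \<le> t" using w(2) by (simp add: t_def pos_le_divide_eq)
  have "(\<Sum>k\<in>UNIV. w $ k * c $ k) \<le> (m + E) * (\<Sum>k\<in>UNIV. w $ k * q $ k)"
    unfolding sum_distrib_left using m(2) w(1) by (intro sum_mono) (metis mult.left_commute mult_left_mono)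
  then have "t \<le> m + E" using w(2) by (simp add: t_def pos_divide_le_eq)
  have "\<bar>c $ j - t * q $ j\<bar> \<le> E * q $ j" for j
    using m[of j] mult_right_mono[OF \<open>m \<le> t\<close> q[of j]] mult_right_mono[OF \<open>t \<le> m + E\<close> q[of j]]
    by (simp add: abs_le_iff algebra_simps)
  then show ?thesis unfolding t_def[symmetric] sum_distrib_left by (intro sum_mono)
qed

lemma word_matrix_mult_pos:
  fixes P :: "'i \<Rightarrow> real^'n::finite^'n"
  assumes P: "\<And>i j k. i \<in> \<Lambda> \<Longrightarrow> pmin \<le> P i $ j $ k" and "0 < pmin" and "set ws \<subseteq> \<Lambda>"
    and a: "\<And>k. 0 \<le> a $ k" "0 < (\<Sum>k\<in>UNIV. a $ k)"
  shows "(\<forall>k. 0 \<le> (word_matrix P ws *v a) $ k) \<and> 0 < (\<Sum>k\<in>UNIV. (word_matrix P ws *v a) $ k)"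
  using \<open>set ws \<subseteq> \<Lambda>\<close>
proof (induction ws)
  case (Cons i ws)
  then have "0 < pmin * (\<Sum>k\<in>UNIV. (word_matrix P ws *v a) $ k)" using \<open>0 < pmin\<close> by simp
  also have "\<dots> \<le> (P i *v (word_matrix P ws *v a)) $ k" for k
    using Cons P by (intro positive_matrix_mult_ge) auto
  finally have "0 < (word_matrix P (i # ws) *v a) $ k" for k
    by (simp add: matrix_vector_mul_assoc)
  then show ?case by (simp add: less_imp_le sum_pos)
qed (use a in simp)

lemma osc_le_word_matrix:
  fixes P :: "'i \<Rightarrow> real^'n::finite^'n"
  assumes P: "\<And>i j k. i \<in> \<Lambda> \<Longrightarrow> pmin \<le> P i $ j $ k" "\<And>i j k. i \<in> \<Lambda> \<Longrightarrow> P i $ j $ k \<le> pmax"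
    and "0 < pmin" and \<rho>: "0 \<le> \<rho>" "\<rho> * pmax \<le> pmin"
    and a: "\<And>k. 0 \<le> a $ k" "0 < sa" "sa \<le> (\<Sum>k\<in>UNIV. a $ k)"
    and ws: "ws \<noteq> []" "set ws \<subseteq> \<Lambda>"
  shows "osc_le (word_matrix P ws *v a) (word_matrix P ws *v b)
    (2 * pmax * (\<Sum>k\<in>UNIV. \<bar>b $ k\<bar>) / (pmin * sa) * (1 - \<rho>) ^ (length ws - 1))"
  using ws
proof (induction ws rule: list_nonempty_induct)
  case (single i)
  then show ?case using osc_le_mult_positive_initial[OF P \<open>0 < pmin\<close> a, of i b] by simp
next
  case (cons i ws)
  have "0 < (\<Sum>k\<in>UNIV. a $ k)" using a by linarith
  then have "\<forall>k. 0 \<le> (word_matrix P ws *v a) $ k"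
    using word_matrix_mult_pos[where P = P and \<Lambda> = \<Lambda>, OF P(1) \<open>0 < pmin\<close> _ a(1)] cons.prems by auto
  with cons have "osc_le (P i *v (word_matrix P ws *v a)) (P i *v (word_matrix P ws *v b))
      ((1 - \<rho>) * (2 * pmax * (\<Sum>k\<in>UNIV. \<bar>b $ k\<bar>) / (pmin * sa) * (1 - \<rho>) ^ (length ws - 1)))"
    by (intro osc_le_mult_positive[OF P(1,2) \<rho>]) auto
  then show ?case
    using cons.hyps by (cases ws) (simp_all add: matrix_vector_mul_assoc mult_ac)
qed

section \<open>Families strictly preserving a simplicial cone\<close>

locale cone_preserving_family =
  fixes \<Lambda> :: "'i set"
    and A :: "'i \<Rightarrow> real^('d::finite option)^('d option)"
    and v :: "'d option \<Rightarrow> real^('d option)"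
  assumes finite_index: "finite \<Lambda>"
    and inj_v: "inj v"
    and independent_v: "independent (range v)"
    and cone_last_pos: "simp_cone v \<subseteq> {y. y $ None > 0} \<union> {0}"
    and strictly_preserves_cone: "\<forall>i\<in>\<Lambda>. strictly_preserves (A i) (simp_cone v)"
begin

abbreviation T :: "real^('d option)^('d option)" where
  "T \<equiv> cone_matrix v"

definition P :: "'i \<Rightarrow> real^('d option)^('d option)" where
  "P i = matrix_inv T ** A i ** T"

definition height :: "real^('d option)" where
  "height = (\<chi> k. v k $ None)"

lemma T_matrix_inv: "T ** matrix_inv T = mat 1" "matrix_inv T ** T = mat 1"
  using invertible_cone_matrix[OF inj_v independent_v] someI_ex[of "\<lambda>B. T ** B = mat 1 \<and> B ** T = mat 1"]
  unfolding invertible_def matrix_inv_def by blast+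

lemma last_coord_T: "(T *v c) $ None = (\<Sum>k\<in>UNIV. height $ k * c $ k)"
  by (simp add: cone_matrix_mult height_def mult.commute)

lemma simp_cone_T: "simp_cone v = {T *v c | c. \<forall>k. 0 \<le> c $ k}"
  by (rule simp_cone_eq_image)

lemma v_in_simp_cone: "v k \<in> simp_cone v"
  unfolding simp_cone_T by (auto simp: cone_matrix_axis[symmetric] axis_def)

lemma v_nonzero: "v k \<noteq> 0"
  using inj_v independent_v real_vector.dependent_zero by (metis rangeI)

lemma height_pos: "0 < height $ k"
  using cone_last_pos v_in_simp_cone v_nonzero by (fastforce simp: height_def)

lemma A_T: "A i ** T = T ** P i"
  by (metis P_def T_matrix_inv(1) matrix_mul_assoc matrix_mul_lid)

lemma P_pos:
  assumes "i \<in> \<Lambda>"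
  shows "0 < P i $ j $ k"
proof -
  have "v k \<in> simp_cone v - {0}" using v_in_simp_cone v_nonzero by simp
  then have "A i *v v k \<in> interior (simp_cone v)"
    using strictly_preserves_cone assms unfolding strictly_preserves_def by blast
  then obtain p where p: "\<forall>j. 0 < p $ j" "A i *v v k = T *v p"
    using interior_simp_cone_coords[OF inj_v independent_v] by blast
  have "P i $ j $ k = (P i *v axis k 1) $ j"
    by (simp add: matrix_vector_mult_def axis_def if_distrib cong: if_cong)
  also have "P i *v axis k 1 = matrix_inv T *v (A i *v v k)"
    by (simp add: P_def matrix_vector_mul_assoc[symmetric] cone_matrix_axis)
  also have "\<dots> = p"
    using p(2) by (simp add: matrix_vector_mul_assoc T_matrix_inv)
  finally show ?thesis using p(1) by simp
qed

text \<open>The element 1 only keeps the sets nonempty when \<open>\<Lambda> = {}\<close>.\<close>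
definition pmin :: real where
  "pmin = Min (insert 1 {P i $ j $ k | i j k. i \<in> \<Lambda>})"

definition pmax :: real where
  "pmax = Max (insert 1 {P i $ j $ k | i j k. i \<in> \<Lambda>})"

definition hmin :: real where
  "hmin = Min (range (\<lambda>k. height $ k))"

definition hmax :: real where
  "hmax = Max (range (\<lambda>k. height $ k))"

lemma finite_P_entries: "finite (insert 1 {P i $ j $ k | i j k. i \<in> \<Lambda>})"
proof -
  have "{P i $ j $ k | i j k. i \<in> \<Lambda>} \<subseteq> (\<lambda>(i, j, k). P i $ j $ k) ` (\<Lambda> \<times> UNIV \<times> UNIV)"
  proof clarify
    fix i j k assume "i \<in> \<Lambda>"
    then show "P i $ j $ k \<in> (\<lambda>(i, j, k). P i $ j $ k) ` (\<Lambda> \<times> UNIV \<times> UNIV)"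
      by (intro image_eqI[of _ _ "(i, j, k)"]) auto
  qed
  then show ?thesis using finite_index by (simp add: finite_subset)
qed

lemma pmin_pos: "0 < pmin"
  unfolding pmin_def using finite_P_entries P_pos by (subst Min_gr_iff) auto

lemma P_bounds:
  assumes "i \<in> \<Lambda>"
  shows "pmin \<le> P i $ j $ k" "P i $ j $ k \<le> pmax"
  unfolding pmin_def pmax_def using finite_P_entries assms by (auto intro: Min_le Max_ge)

lemma pmin_le_pmax: "pmin \<le> pmax"
  unfolding pmin_def pmax_def using finite_P_entries by (meson Max_ge Min_le insertI1 order_trans)

lemma height_bounds: "hmin \<le> height $ k" "height $ k \<le> hmax"
  unfolding hmin_def hmax_def by (auto intro: Min_le Max_ge)

lemma hmin_pos: "0 < hmin"
  unfolding hmin_def using height_pos by (subst Min_gr_iff) auto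

lemma hmax_pos: "0 < hmax"
  using hmin_pos height_bounds[of undefined] by linarith

lemma word_matrix_T: "word_matrix A ws *v (T *v c) = T *v (word_matrix P ws *v c)"
proof -
  have "word_matrix A ws ** T = T ** word_matrix P ws"
    by (induction ws) (simp_all, metis A_T matrix_mul_assoc)
  then show ?thesis by (simp add: matrix_vector_mul_assoc)
qed

lemma last_coord_T_ge: "\<forall>k. 0 \<le> q $ k \<Longrightarrow> hmin * (\<Sum>k\<in>UNIV. q $ k) \<le> (T *v q) $ None"
  unfolding last_coord_T sum_distrib_left by (intro sum_mono mult_right_mono) (auto simp: height_bounds)

lemma Vbar_coords:
  assumes "x \<in> Vbar (simp_cone v)"
  obtains a where "\<forall>k. 0 \<le> a $ k" "lift1 x = T *v a" "1 / hmax \<le> (\<Sum>k\<in>UNIV. a $ k)"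
proof -
  obtain y where y: "y \<in> simp_cone v" "y $ None = 1" "x = projd y"
    using assms unfolding Vbar_def by blast
  then have "lift1 x = y" by (simp add: lift1_projd)
  with y(1) obtain a where a: "\<forall>k. 0 \<le> a $ k" "lift1 x = T *v a"
    unfolding simp_cone_T by auto
  have "1 = (\<Sum>k\<in>UNIV. height $ k * a $ k)" using a(2) last_coord_T[of a] by (metis lift1_nth(1))
  also have "\<dots> \<le> hmax * (\<Sum>k\<in>UNIV. a $ k)"
    unfolding sum_distrib_left using a(1) by (intro sum_mono mult_right_mono) (auto simp: height_bounds)
  finally have "1 / hmax \<le> (\<Sum>k\<in>UNIV. a $ k)"
    using hmax_pos by (simp add: field_simps)
  with a that show ?thesis by blast
qed

lemma word_coords_pos:
  assumes "set ws \<subseteq> \<Lambda>" "\<forall>k. 0 \<le> a $ k" "0 < (\<Sum>k\<in>UNIV. a $ k)"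
  shows "\<forall>k. 0 \<le> (word_matrix P ws *v a) $ k" "0 < (\<Sum>k\<in>UNIV. (word_matrix P ws *v a) $ k)"
  using word_matrix_mult_pos[where P = P and \<Lambda> = \<Lambda>, OF P_bounds(1) pmin_pos] assms by auto

lemma denominator_pos:
  assumes "x \<in> Vbar (simp_cone v)" "set ws \<subseteq> \<Lambda>"
  shows "0 < (word_matrix A ws *v lift1 x) $ None"
proof -
  obtain a where a: "\<forall>k. 0 \<le> a $ k" "lift1 x = T *v a" "1 / hmax \<le> (\<Sum>k\<in>UNIV. a $ k)"
    using Vbar_coords[OF assms(1)] .
  have "0 < 1 / hmax" using hmax_pos by simp
  then have "0 < (\<Sum>k\<in>UNIV. a $ k)" using a(3) by linarith
  then have q: "\<forall>k. 0 \<le> (word_matrix P ws *v a) $ k" "0 < (\<Sum>k\<in>UNIV. (word_matrix P ws *v a) $ k)"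
    using word_coords_pos[OF assms(2) a(1)] by simp_all
  have "0 < hmin * (\<Sum>k\<in>UNIV. (word_matrix P ws *v a) $ k)" using q(2) hmin_pos by simp
  also have "\<dots> \<le> (word_matrix A ws *v lift1 x) $ None"
    using last_coord_T_ge[OF q(1)] by (simp add: a(2) word_matrix_T)
  finally show ?thesis .
qed

lemma fA_maps_Vbar:
  assumes "i \<in> \<Lambda>"
  shows "fA (A i) ` Vbar (simp_cone v) \<subseteq> Vbar (simp_cone v)"
proof clarify
  fix x assume x: "x \<in> Vbar (simp_cone v)"
  then obtain y where y: "y \<in> simp_cone v" "y $ None = 1" "x = projd y"
    unfolding Vbar_def by blast
  then have "lift1 x = y" by (simp add: lift1_projd)
  define d where "d = (A i *v y) $ None"
  have "0 < d" using denominator_pos[OF x, of "[i]"] assms \<open>lift1 x = y\<close> by (simp add: d_def)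
  have "y \<in> simp_cone v - {0}" using y by auto
  then have "A i *v y \<in> simp_cone v"
    using strictly_preserves_cone assms interior_subset unfolding strictly_preserves_def by blast
  then have "(1 / d) *\<^sub>R (A i *v y) \<in> simp_cone v \<inter> {y. y $ None = 1}"
    using \<open>0 < d\<close> by (simp add: simp_cone_scaleR d_def)
  moreover have "fA (A i) x = projd ((1 / d) *\<^sub>R (A i *v y))"
    by (simp add: fA_def \<open>lift1 x = y\<close> d_def)
  ultimately show "fA (A i) x \<in> Vbar (simp_cone v)"
    unfolding Vbar_def by blast
qed

lemma fA_real_analytic_near_Vbar:
  "\<exists>U. open U \<and> Vbar (simp_cone v) \<subseteq> U \<and> (\<forall>i\<in>\<Lambda>. real_analytic_on (fA (A i)) U)"
proof (intro exI conjI ballI)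
  let ?U = "\<Inter>i\<in>\<Lambda>. {x. (A i *v lift1 x) $ None \<noteq> 0}"
  show "open ?U" using finite_index by (simp add: open_INT open_fA_denominator_nonzero)
  show "Vbar (simp_cone v) \<subseteq> ?U"
    using denominator_pos[of _ "[i]" for i] by fastforce
  show "real_analytic_on (fA (A i)) ?U" if "i \<in> \<Lambda>" for i
    using that by (intro real_analytic_on_subset[OF real_analytic_on_fA]) auto
qed

text \<open>Halving \<open>pmin / pmax\<close> keeps the factor positive when all entries are equal.\<close>
definition contraction :: real where
  "contraction = 1 - pmin / (2 * pmax)"

definition deriv_const :: real where
  "deriv_const = 2 * pmax * hmax * CARD('d option) * onorm (\<lambda>h. matrix_inv T *v lift0 h)
     * onorm (\<lambda>y. projd (T *v y)) / (pmin * hmin)"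

lemma contraction_bounds: "0 < contraction" "contraction < 1"
  using pmin_pos pmin_le_pmax by (auto simp: contraction_def field_simps)

lemma norm_projd_reduced_le:
  assumes q: "\<forall>k. 0 \<le> q $ k" "0 < (\<Sum>k\<in>UNIV. q $ k)" and "osc_le q c E" "0 \<le> E"
  shows "norm (projd (T *v (c - ((T *v c) $ None / (T *v q) $ None) *\<^sub>R q))) / (T *v q) $ None
    \<le> onorm (\<lambda>y. projd (T *v y)) * E / hmin"
proof -
  let ?L = "onorm (\<lambda>y. projd (T *v y))"
  define d where "d = (T *v q) $ None"
  define t where "t = (T *v c) $ None / d"
  have "hmin * (\<Sum>k\<in>UNIV. q $ k) \<le> d"
    unfolding d_def using last_coord_T_ge[OF q(1)] .
  moreover have "0 < hmin * (\<Sum>k\<in>UNIV. q $ k)" using q(2) hmin_pos by simp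
  ultimately have "0 < d" by linarith
  have "(\<Sum>j\<in>UNIV. q $ j) / d \<le> 1 / hmin"
    using \<open>hmin * (\<Sum>k\<in>UNIV. q $ k) \<le> d\<close> \<open>0 < d\<close> hmin_pos by (simp add: field_simps)
  have "norm (c - t *\<^sub>R q) \<le> (\<Sum>j\<in>UNIV. \<bar>c $ j - t * q $ j\<bar>)"
    using norm_le_l1_cart[of "c - t *\<^sub>R q"] by simp
  also have "\<dots> \<le> E * (\<Sum>j\<in>UNIV. q $ j)"
    using sum_abs_sub_ratio_le_osc[of q height] q \<open>osc_le q c E\<close> height_pos \<open>0 < d\<close>
    by (simp add: t_def d_def last_coord_T less_imp_le)
  finally have "norm (c - t *\<^sub>R q) \<le> E * (\<Sum>j\<in>UNIV. q $ j)" .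
  have "norm (projd (T *v (c - t *\<^sub>R q))) \<le> ?L * norm (c - t *\<^sub>R q)"
    by (rule onorm[OF bounded_linear_projd_mult])
  also have "\<dots> \<le> ?L * (E * (\<Sum>j\<in>UNIV. q $ j))"
    using \<open>norm (c - t *\<^sub>R q) \<le> E * (\<Sum>j\<in>UNIV. q $ j)\<close> onorm_pos_le[OF bounded_linear_projd_mult]
    by (rule mult_left_mono)
  finally have "norm (projd (T *v (c - t *\<^sub>R q))) / d \<le> ?L * E * ((\<Sum>j\<in>UNIV. q $ j) / d)"
    using \<open>0 < d\<close> by (simp add: divide_right_mono)
  also have "\<dots> \<le> ?L * E * (1 / hmin)"
    using \<open>(\<Sum>j\<in>UNIV. q $ j) / d \<le> 1 / hmin\<close> \<open>0 \<le> E\<close> onorm_pos_le[OF bounded_linear_projd_mult, of T]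
    by (intro mult_left_mono) auto
  finally show ?thesis by (simp add: d_def t_def)
qed

lemma norm_dfA_word_matrix_le:
  assumes x: "x \<in> Vbar (simp_cone v)" and ws: "set ws \<subseteq> \<Lambda>" "ws \<noteq> []"
  shows "norm (dfA (word_matrix A ws) x h) \<le> deriv_const * contraction ^ (length ws - 1) * norm h"
proof -
  obtain a where a: "\<forall>k. 0 \<le> a $ k" "lift1 x = T *v a" "1 / hmax \<le> (\<Sum>k\<in>UNIV. a $ k)"
    using Vbar_coords[OF x] .
  have "0 < 1 / hmax" using hmax_pos by simp
  let ?I = "onorm (\<lambda>h. matrix_inv T *v lift0 h)"
  define q where "q = word_matrix P ws *v a"
  define b where "b = matrix_inv T *v lift0 h"
  define c where "c = word_matrix P ws *v b"
  define K where "K = 2 * pmax * hmax / pmin * contraction ^ (length ws - 1)"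
  have "0 \<le> K"
    using pmin_pos pmin_le_pmax contraction_bounds hmax_pos by (simp add: K_def)
  have q: "\<forall>k. 0 \<le> q $ k" "0 < (\<Sum>k\<in>UNIV. q $ k)"
    using word_coords_pos[OF ws(1) a(1)] a(3) \<open>0 < 1 / hmax\<close> unfolding q_def by simp_all
  have \<rho>: "0 \<le> pmin / (2 * pmax)" "pmin / (2 * pmax) * pmax \<le> pmin"
    using pmin_pos pmin_le_pmax by (simp_all add: field_simps)
  have "osc_le q c (2 * pmax * (\<Sum>k\<in>UNIV. \<bar>b $ k\<bar>) / (pmin * (1 / hmax)) * contraction ^ (length ws - 1))"
    unfolding q_def c_def contraction_def
    by (rule osc_le_word_matrix[OF P_bounds pmin_pos \<rho> a(1)[rule_format] \<open>0 < 1 / hmax\<close> a(3) ws(2,1)])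
  moreover have "2 * pmax * (\<Sum>k\<in>UNIV. \<bar>b $ k\<bar>) / (pmin * (1 / hmax)) * contraction ^ (length ws - 1)
      = K * (\<Sum>k\<in>UNIV. \<bar>b $ k\<bar>)"
    by (simp add: K_def)
  ultimately have osc: "osc_le q c (K * (\<Sum>k\<in>UNIV. \<bar>b $ k\<bar>))" by simp
  have "T *v b = lift0 h" by (simp add: b_def matrix_vector_mul_assoc T_matrix_inv)
  then have "dfA (word_matrix A ws) x h = (1 / (T *v q) $ None) *\<^sub>R
      projd (T *v (c - ((T *v c) $ None / (T *v q) $ None) *\<^sub>R q))"
    by (intro dfA_in_coords) (simp_all add: a(2) q_def c_def word_matrix_T flip: \<open>T *v b = lift0 h\<close>)
  moreover have "0 < (T *v q) $ None"
    using last_coord_T_ge[OF q(1)] q(2) hmin_pos by (meson mult_pos_pos order.strict_trans2)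
  ultimately have "norm (dfA (word_matrix A ws) x h)
      = norm (projd (T *v (c - ((T *v c) $ None / (T *v q) $ None) *\<^sub>R q))) / (T *v q) $ None"
    by simp
  also have "\<dots> \<le> onorm (\<lambda>y. projd (T *v y)) * (K * (\<Sum>k\<in>UNIV. \<bar>b $ k\<bar>)) / hmin"
    using \<open>0 \<le> K\<close> by (intro norm_projd_reduced_le[OF q osc]) (simp add: sum_nonneg)
  also have "\<dots> \<le> onorm (\<lambda>y. projd (T *v y)) * (K * (CARD('d option) * (?I * norm h))) / hmin"
  proof -
    have "(\<Sum>k\<in>UNIV. \<bar>b $ k\<bar>) \<le> (\<Sum>k\<in>(UNIV :: 'd option set). norm b)"
      by (intro sum_mono component_le_norm_cart)
    also have "\<dots> \<le> CARD('d option) * (?I * norm h)"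
      using onorm[OF bounded_linear_mult_lift0, of "matrix_inv T" h] by (simp add: b_def)
    finally show ?thesis
      using \<open>0 \<le> K\<close> hmin_pos onorm_pos_le[OF bounded_linear_projd_mult]
      by (intro divide_right_mono mult_left_mono) auto
  qed
  also have "\<dots> = deriv_const * contraction ^ (length ws - 1) * norm h"
    by (simp add: deriv_const_def K_def)
  finally show ?thesis .
qed

lemma fword_derivative_decay:
  "\<exists>C \<gamma>. C > 0 \<and> 0 < \<gamma> \<and> \<gamma> < 1 \<and>
     (\<forall>n ws x. length ws = n \<longrightarrow> set ws \<subseteq> \<Lambda> \<longrightarrow> x \<in> Vbar (simp_cone v) \<longrightarrow>
        (\<exists>D. (fword A ws has_derivative D) (at x) \<and> onorm D \<le> C * \<gamma> ^ n))"
proof -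
  define C where "C = max 1 (deriv_const / contraction)"
  have "0 < C" by (simp add: C_def)
  moreover have "\<exists>D. (fword A ws has_derivative D) (at x) \<and> onorm D \<le> C * contraction ^ n"
    if n: "length ws = n" and ws: "set ws \<subseteq> \<Lambda>" and x: "x \<in> Vbar (simp_cone v)" for n ws x
  proof (cases "ws = []")
    case True
    have "(fword A ws has_derivative (\<lambda>h. h)) (at x)" using True by (simp add: id_def)
    then show ?thesis using True n by (intro exI[of _ "\<lambda>h. h"]) (simp add: C_def onorm_id)
  next
    case False
    have "(word_matrix A (drop k ws) *v lift1 x) $ None \<noteq> 0" for k
      using denominator_pos[OF x] ws set_drop_subset by (metis order.trans less_irrefl)
    then have "(fword A ws has_derivative dfA (word_matrix A ws) x) (at x)"
      by (intro has_derivative_fword) simp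
    moreover have "deriv_const * contraction ^ (length ws - 1) \<le> C * contraction ^ n"
    proof -
      have "deriv_const * contraction ^ (length ws - 1) = deriv_const / contraction * contraction ^ n"
        using False n contraction_bounds by (cases ws) auto
      also have "\<dots> \<le> C * contraction ^ n"
        using contraction_bounds by (intro mult_right_mono) (simp_all add: C_def)
      finally show ?thesis .
    qed
    then have "norm (dfA (word_matrix A ws) x h) \<le> C * contraction ^ n * norm h" for h
      using norm_dfA_word_matrix_le[OF x ws False, of h] by (meson mult_right_mono norm_ge_zero order.trans)
    ultimately show ?thesis using onorm_le by blast
  qed
  ultimately show ?thesis using contraction_bounds by blast
qed

end

theorem lemma2p1:
  fixes \<Lambda> :: "'i set"
    and A :: "'i \<Rightarrow> real^('d::finite option)^('d option)"
    and v :: "'d option \<Rightarrow> real^('d option)"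
  assumes fin: "finite \<Lambda>"
    and inv: "\<forall>i\<in>\<Lambda>. invertible (A i)"
    and indep: "inj v" "independent (range v)"
    and cone_pos: "simp_cone v \<subseteq> {y. y $ None > 0} \<union> {0}"
    and strict: "\<forall>i\<in>\<Lambda>. strictly_preserves (A i) (simp_cone v)"
  shows "(\<forall>i\<in>\<Lambda>. fA (A i) ` Vbar (simp_cone v) \<subseteq> Vbar (simp_cone v))
    \<and> (\<exists>U. open U \<and> Vbar (simp_cone v) \<subseteq> U \<and> (\<forall>i\<in>\<Lambda>. real_analytic_on (fA (A i)) U))
    \<and> (\<exists>C \<gamma>. C > 0 \<and> 0 < \<gamma> \<and> \<gamma> < 1 \<and>
         (\<forall>n ws x. length ws = n \<longrightarrow> set ws \<subseteq> \<Lambda> \<longrightarrow> x \<in> Vbar (simp_cone v) \<longrightarrow>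
            (\<exists>D. (fword A ws has_derivative D) (at x) \<and> onorm D \<le> C * \<gamma> ^ n)))"
proof -
  interpret cone_preserving_family \<Lambda> A v
    using fin indep cone_pos strict by unfold_locales
  show ?thesis
    using fA_maps_Vbar fA_real_analytic_near_Vbar fword_derivative_decay by blast
qed

end
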